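(* Let $A\in\mathcal E_n$ be nonzero with $\operatorname{rk}(A)=\operatorname{st}_+(A)=r$, Perron eigenvalue $\lambda_1$ and normalised Perron eigenvector $u$. Suppose $$A=U(\lambda_1\oplus D_1)U^T=BCB^T,$$ where $D_1$ is an $(r-1)\times(r-1)$ diagonal matrix with nonzero diagonal entries, $U=\begin{pmatrix}u&U_1\end{pmatrix}\in\mathbb R^{n\times r}$ with $U^TU=I_r$, $B\in\mathbb R_+^{n\times r}$, and $C\in\mathbb R_+^{r\times r}$ is symmetric. Then there exists an invertible $T\in\mathbb R^{r\times r}$ whose first column is entrywise nonnegative and such that the first row of $T^{-1}$ is entrywise nonnegative, with $B=UT^{-1}$ and $C=T(\lambda_1\oplus D_1)T^T$. If moreover $A$ is irreducible, then the first column of $T$ and the first row of $T^{-1}$ are entrywise positive.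
   Context: $\mathcal S_n^+$ is the set of $n\times n$ symmetric entrywise nonnegative real matrices; $\mathbb R_+^{p\times q}$ the entrywise nonnegative $p\times q$ real matrices. The SNT-rank $\operatorname{st}_+(A)$ of $A\in\mathcal S_n^+$ is the minimal $k$ such that $A=BCB^T$ with $B\in\mathbb R_+^{n\times k}$ and $C\in\mathcal S_k^+$. $\mathcal E_n=\{A\in\mathcal S_n^+:\operatorname{rk}(A)=\operatorname{st}_+(A)\}$. The Perron eigenvalue is the spectral radius $\lambda_1$ of $A$, and a normalised Perron eigenvector is an entrywise nonnegative eigenvector $u$ for $\lambda_1$ with $u^Tu=1$. For matrices $X,Y$, $X\oplus Y=\begin{pmatrix}X&0\\0&Y\end{pmatrix}$. *)

theory Defs
  imports "Jordan_Normal_Form.Spectral_Radius" "Jordan_Normal_Form.DL_Rank"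
begin

definition nonneg_mat :: "real mat \<Rightarrow> bool" where
  "nonneg_mat M \<longleftrightarrow> (\<forall>i < dim_row M. \<forall>j < dim_col M. M $$ (i,j) \<ge> 0)"

definition nonneg_vec :: "real vec \<Rightarrow> bool" where
  "nonneg_vec v \<longleftrightarrow> (\<forall>i < dim_vec v. v $ i \<ge> 0)"

definition pos_vec :: "real vec \<Rightarrow> bool" where
  "pos_vec v \<longleftrightarrow> (\<forall>i < dim_vec v. v $ i > 0)"

definition SNN :: "nat \<Rightarrow> real mat set" where
  "SNN n = {A. A \<in> carrier_mat n n \<and> A\<^sup>T = A \<and> nonneg_mat A}"

definition mat_rank :: "nat \<Rightarrow> real mat \<Rightarrow> nat" where
  "mat_rank n A = vec_space.rank n A"

definition snt_rank :: "nat \<Rightarrow> real mat \<Rightarrow> nat" where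
  "snt_rank n A = (LEAST k. \<exists>B C. B \<in> carrier_mat n k \<and> nonneg_mat B \<and> C \<in> SNN k
       \<and> A = B * C * B\<^sup>T)"

definition E_set :: "nat \<Rightarrow> real mat set" where
  "E_set n = {A \<in> SNN n. mat_rank n A = snt_rank n A}"

definition perron_eigenvalue :: "real mat \<Rightarrow> real" where
  "perron_eigenvalue A = spectral_radius (map_mat complex_of_real A)"

definition normalised_perron_eigenvector :: "nat \<Rightarrow> real mat \<Rightarrow> real vec \<Rightarrow> bool" where
  "normalised_perron_eigenvector n A u \<longleftrightarrow> u \<in> carrier_vec n \<and> nonneg_vec u
      \<and> A *\<^sub>v u = perron_eigenvalue A \<cdot>\<^sub>v u \<and> u \<bullet> u = 1"

definition dsum_mat :: "real mat \<Rightarrow> real mat \<Rightarrow> real mat" where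
  "dsum_mat X Y = four_block_mat X (0\<^sub>m (dim_row X) (dim_col Y)) (0\<^sub>m (dim_row Y) (dim_col X)) Y"

definition scalar_mat :: "real \<Rightarrow> real mat" where
  "scalar_mat a = mat 1 1 (\<lambda>_. a)"

text \<open>For n = 1 we use the convention that the matrix must be nonzero.\<close>
definition irreducible_mat :: "nat \<Rightarrow> real mat \<Rightarrow> bool" where
  "irreducible_mat n A \<longleftrightarrow> A \<noteq> 0\<^sub>m n n \<and>
     (\<forall>S. S \<subseteq> {..<n} \<and> S \<noteq> {} \<and> S \<noteq> {..<n} \<longrightarrow>
        (\<exists>i\<in>S. \<exists>j\<in>{..<n} - S. A $$ (i,j) \<noteq> 0))"

end

theory Submission
  imports Defs
begin

text \<open>Since U has orthonormal columns, compressing A = U L U^T = B C B^T with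
  L = \<lambda> \<oplus> D1 by U gives L = S C S^T for S = U^T B.  The Perron eigenvalue \<lambda> is nonzero,
  since otherwise rk A < r; so L is invertible, hence so are S and C, and T = S^-1 satisfies
  B = U S and C = T L T^T.  The first row of S is B^T u \<ge> 0, and comparing first columns in
  T L = C S^T gives \<lambda> T e1 = C B^T u \<ge> 0.  For irreducible A the Perron vector u is positive,
  while B has no zero column (T U^T is a left inverse) and C no zero row, so both vectors are
  positive.\<close>

lemma rank_le_sum_of_products:
  fixes f g :: "nat \<Rightarrow> nat \<Rightarrow> 'a :: field"
  shows "vec_space.rank n (mat n nc (\<lambda>(i,j). \<Sum>l<k. f l i * g l j)) \<le> k"
proof (induction k)
  case 0
  have "mat n nc (\<lambda>(i,j). \<Sum>l<0. f l i * g l j) = 0\<^sub>m n nc"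
    by (rule eq_matI) auto
  then show ?case using vec_space.rank_0I by (metis le_refl)
next
  case (Suc k)
  have split: "mat n nc (\<lambda>(i,j). \<Sum>l<Suc k. f l i * g l j)
     = mat n nc (\<lambda>(i,j). \<Sum>l<k. f l i * g l j) + mat n nc (\<lambda>(i,j). f k i * g k j)"
    by (rule eq_matI) auto
  have "vec_space.rank n (mat n nc (\<lambda>(i,j). f k i * g k j)) \<le> 1"
    by (rule vec_space.rank_le_1_product_entries[of _ n nc "f k" "g k"]) auto
  moreover have "vec_space.rank n (mat n nc (\<lambda>(i,j). \<Sum>l<Suc k. f l i * g l j))
     \<le> vec_space.rank n (mat n nc (\<lambda>(i,j). \<Sum>l<k. f l i * g l j))
       + vec_space.rank n (mat n nc (\<lambda>(i,j). f k i * g k j))"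
    unfolding split by (rule vec_space.rank_subadditive) auto
  ultimately show ?case using Suc by linarith
qed

lemma rank_mult_mat_zero_first_col:
  fixes M N :: "'a :: field mat"
  assumes M: "M \<in> carrier_mat n (Suc k)" and N: "N \<in> carrier_mat (Suc k) nc"
    and M0: "col M 0 = 0\<^sub>v n"
  shows "vec_space.rank n (M * N) \<le> k"
proof -
  have "M * N = mat n nc (\<lambda>(i,j). \<Sum>l<k. M $$ (i, Suc l) * N $$ (Suc l, j))" (is "_ = ?R")
  proof (rule eq_matI)
    fix i j assume "i < dim_row ?R" "j < dim_col ?R"
    hence ij: "i < n" "j < nc" by auto
    have "M $$ (i, 0) = 0" using arg_cong[OF M0, of "\<lambda>v. v $ i"] ij M by simp
    have "(M * N) $$ (i,j) = (\<Sum>l<Suc k. M $$ (i,l) * N $$ (l,j))"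
      using ij M N by (simp add: scalar_prod_def atLeast0LessThan)
    also have "\<dots> = (\<Sum>l<k. M $$ (i, Suc l) * N $$ (Suc l, j))"
      unfolding sum.lessThan_Suc_shift using \<open>M $$ (i, 0) = 0\<close> by simp
    finally show "(M * N) $$ (i,j) = ?R $$ (i,j)" using ij by simp
  qed (use M N in auto)
  then show ?thesis
    using rank_le_sum_of_products[of n nc "\<lambda>l i. M $$ (i, Suc l)" "\<lambda>l j. N $$ (Suc l, j)" k] by simp
qed

lemma det_nonzero_imp_inverse:
  fixes A :: "'a :: field mat"
  assumes "A \<in> carrier_mat n n" "det A \<noteq> 0"
  obtains B where "B \<in> carrier_mat n n" "A * B = 1\<^sub>m n" "B * A = 1\<^sub>m n"
  using det_non_zero_imp_unit[OF assms, of undefined]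
  unfolding Units_def ring_mat_def by auto

lemma right_inverse_imp_row_nonzero:
  fixes M N :: "'a :: semiring_1 mat"
  assumes "M \<in> carrier_mat k m" "N \<in> carrier_mat m k" "M * N = 1\<^sub>m k" "i < k"
  shows "\<exists>j<m. M $$ (i,j) \<noteq> 0"
proof (rule ccontr)
  assume "\<not> (\<exists>j<m. M $$ (i,j) \<noteq> 0)"
  hence "(M * N) $$ (i,i) = 0" using assms(1,2,4) by (simp add: scalar_prod_def)
  with assms show False by simp
qed

lemma det_nonzero_imp_row_nonzero:
  fixes C :: "'a :: field mat"
  assumes "C \<in> carrier_mat m m" "det C \<noteq> 0" "i < m"
  shows "\<exists>j<m. C $$ (i,j) \<noteq> 0"
proof -
  obtain Ci where "Ci \<in> carrier_mat m m" "C * Ci = 1\<^sub>m m"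
    using det_nonzero_imp_inverse[OF assms(1,2)] by blast
  then show ?thesis using right_inverse_imp_row_nonzero assms by blast
qed

lemma left_inverse_imp_col_nonzero:
  fixes M N :: "'a :: semiring_1 mat"
  assumes "N \<in> carrier_mat k m" "M \<in> carrier_mat m k" "N * M = 1\<^sub>m k" "j < k"
  shows "\<exists>i<m. M $$ (i,j) \<noteq> 0"
proof (rule ccontr)
  assume "\<not> (\<exists>i<m. M $$ (i,j) \<noteq> 0)"
  hence "(N * M) $$ (j,j) = 0" using assms(1,2,4) by (simp add: scalar_prod_def)
  with assms show False by simp
qed

lemma mult_mat_vec_unit_vec:
  fixes A :: "'a :: semiring_1 mat"
  shows "A \<in> carrier_mat m n \<Longrightarrow> j < n \<Longrightarrow> A *\<^sub>v unit_vec n j = col A j"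
  by (intro eq_vecI) auto

lemma row_transpose_mult:
  fixes P Q :: "'a :: comm_semiring_0 mat"
  assumes "P \<in> carrier_mat n k" "Q \<in> carrier_mat n m" "i < k"
  shows "row (P\<^sup>T * Q) i = Q\<^sup>T *\<^sub>v col P i"
  using assms by (intro eq_vecI) (auto simp: comm_scalar_prod[of _ n])

lemma dsum_scalar_mat_carrier:
  "D \<in> carrier_mat k k \<Longrightarrow> dsum_mat (scalar_mat a) D \<in> carrier_mat (Suc k) (Suc k)"
  unfolding dsum_mat_def scalar_mat_def by auto

lemma col_dsum_scalar_mat_0:
  assumes "D \<in> carrier_mat k k"
  shows "col (dsum_mat (scalar_mat a) D) 0 = a \<cdot>\<^sub>v unit_vec (Suc k) 0"
  using assms unfolding dsum_mat_def scalar_mat_def by (intro eq_vecI) (auto simp: unit_vec_def)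

lemma col_0_mult_dsum_scalar_mat:
  fixes T D :: "real mat"
  assumes "T \<in> carrier_mat m (Suc k)" "D \<in> carrier_mat k k"
  shows "col (T * dsum_mat (scalar_mat a) D) 0 = a \<cdot>\<^sub>v col T 0"
proof -
  have "col (T * dsum_mat (scalar_mat a) D) 0 = T *\<^sub>v (a \<cdot>\<^sub>v unit_vec (Suc k) 0)"
    using col_mult2[OF assms(1) dsum_scalar_mat_carrier[OF assms(2)]]
      col_dsum_scalar_mat_0[OF assms(2)] by simp
  also have "\<dots> = a \<cdot>\<^sub>v col T 0" using assms(1) by (simp add: mult_mat_vec mult_mat_vec_unit_vec)
  finally show ?thesis .
qed

lemma det_dsum_scalar_mat:
  assumes "D \<in> carrier_mat k k"
  shows "det (dsum_mat (scalar_mat a) D) = a * det D"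
proof -
  have "det (scalar_mat a) = a" unfolding scalar_mat_def by (subst det_single) auto
  then show ?thesis unfolding dsum_mat_def
    using assms by (subst det_four_block_mat_lower_left_zero[of _ 1 _ k]) (auto simp: scalar_mat_def)
qed

lemma det_diagonal_mat:
  assumes "D \<in> carrier_mat k k" "diagonal_mat D"
  shows "det D = (\<Prod>i<k. D $$ (i,i))"
proof -
  have "upper_triangular D" using assms unfolding diagonal_mat_def upper_triangular_def by auto
  then show ?thesis using assms
    by (simp add: det_upper_triangular prod_list_diag_prod atLeast0LessThan)
qed

lemma dsum_scalar_nonzero_if_full_rank:
  fixes U D :: "real mat"
  assumes U: "U \<in> carrier_mat n (Suc k)" and D: "D \<in> carrier_mat k k"
    and rank: "vec_space.rank n (U * dsum_mat (scalar_mat a) D * U\<^sup>T) = Suc k"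
  shows "a \<noteq> 0"
proof
  assume "a = 0"
  then have "col (U * dsum_mat (scalar_mat a) D) 0 = 0\<^sub>v n"
    using U D by (simp add: col_0_mult_dsum_scalar_mat) (intro eq_vecI; simp)
  then have "vec_space.rank n (U * dsum_mat (scalar_mat a) D * U\<^sup>T) \<le> k"
    using U D dsum_scalar_mat_carrier[OF D] by (intro rank_mult_mat_zero_first_col) auto
  with rank show False by simp
qed

lemma nonneg_mat_transpose [simp]: "nonneg_mat M\<^sup>T \<longleftrightarrow> nonneg_mat M"
  unfolding nonneg_mat_def by auto

lemma nonneg_vec_smult_iff:
  "c > 0 \<Longrightarrow> nonneg_vec (c \<cdot>\<^sub>v v) \<longleftrightarrow> nonneg_vec v"
  unfolding nonneg_vec_def by (simp add: zero_le_mult_iff)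

lemma pos_vec_smult_iff:
  "c > 0 \<Longrightarrow> pos_vec (c \<cdot>\<^sub>v v) \<longleftrightarrow> pos_vec v"
  unfolding pos_vec_def by (simp add: zero_less_mult_iff)

lemma nonneg_scalar_prod:
  "nonneg_vec v \<Longrightarrow> nonneg_vec w \<Longrightarrow> dim_vec w = dim_vec v \<Longrightarrow> v \<bullet> w \<ge> 0"
  unfolding nonneg_vec_def scalar_prod_def by (auto intro: sum_nonneg)

lemma nonneg_mult_mat_vec:
  assumes "nonneg_mat M" "nonneg_vec v" "dim_vec v = dim_col M"
  shows "nonneg_vec (M *\<^sub>v v)"
  using assms by (auto intro!: nonneg_scalar_prod simp: nonneg_vec_def nonneg_mat_def)

lemma pos_mult_mat_vec:
  assumes M: "nonneg_mat M" and rows: "\<And>i. i < dim_row M \<Longrightarrow> \<exists>j<dim_col M. M $$ (i,j) \<noteq> 0"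
    and v: "pos_vec v" "dim_vec v = dim_col M"
  shows "pos_vec (M *\<^sub>v v)"
  unfolding pos_vec_def
proof (intro allI impI)
  fix i assume "i < dim_vec (M *\<^sub>v v)"
  hence i: "i < dim_row M" by simp
  obtain j where j: "j < dim_col M" "M $$ (i,j) \<noteq> 0" using rows[OF i] by blast
  have "M $$ (i,j) > 0" using j i M unfolding nonneg_mat_def by (metis order_le_less)
  have "0 < (\<Sum>l\<in>{0..<dim_col M}. M $$ (i,l) * v $ l)"
  proof (rule sum_pos2[of _ j])
    show "0 < M $$ (i,j) * v $ j"
      using \<open>M $$ (i,j) > 0\<close> j v unfolding pos_vec_def by simp
  qed (use i j M v in \<open>auto simp: nonneg_mat_def pos_vec_def less_imp_le\<close>)
  then show "0 < (M *\<^sub>v v) $ i" using i v by (simp add: scalar_prod_def)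
qed

lemma scalar_prod_self_pos:
  fixes u :: "real vec"
  assumes "u \<in> carrier_vec n" "u \<noteq> 0\<^sub>v n"
  shows "u \<bullet> u > 0"
proof -
  obtain i where i: "i < n" "u $ i \<noteq> 0" using assms by (metis eq_vecI carrier_vecD index_zero_vec)
  have "0 < (\<Sum>l\<in>{0..<n}. u $ l * u $ l)"
    by (rule sum_pos2[of _ i]) (use i in \<open>auto simp: zero_less_mult_iff linorder_neq_iff\<close>)
  then show ?thesis using assms by (simp add: scalar_prod_def)
qed

lemma eigenvalue_nonneg_if_nonneg_eigenvector:
  assumes A: "A \<in> carrier_mat n n" "nonneg_mat A"
    and u: "u \<in> carrier_vec n" "nonneg_vec u" "u \<noteq> 0\<^sub>v n"
    and eig: "A *\<^sub>v u = lam \<cdot>\<^sub>v u"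
  shows "lam \<ge> 0"
proof -
  have "u \<bullet> u > 0" using u by (simp add: scalar_prod_self_pos)
  moreover have "lam * (u \<bullet> u) = u \<bullet> (A *\<^sub>v u)" using eig u by simp
  moreover have "u \<bullet> (A *\<^sub>v u) \<ge> 0" using A u by (simp add: nonneg_scalar_prod nonneg_mult_mat_vec)
  ultimately show ?thesis by (smt (verit) mult_neg_pos)
qed

text \<open>The zero set of a nonnegative eigenvector is closed in the sense of irreducible_mat:
  A(a,b) u(b) \<le> (A u)(a) = \<lambda> u(a) = 0 for a in it.\<close>
lemma nonneg_eigenvector_pos_if_irreducible:
  assumes A: "A \<in> carrier_mat n n" "nonneg_mat A" "irreducible_mat n A"
    and u: "u \<in> carrier_vec n" "nonneg_vec u" "u \<noteq> 0\<^sub>v n"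
    and eig: "A *\<^sub>v u = lam \<cdot>\<^sub>v u"
  shows "pos_vec u"
proof (rule ccontr)
  define Z where "Z = {k. k < n \<and> u $ k = 0}"
  assume "\<not> pos_vec u"
  then have "Z \<noteq> {}" using u unfolding pos_vec_def nonneg_vec_def Z_def by (auto simp: order_le_less)
  moreover have "Z \<noteq> {..<n}"
  proof
    assume "Z = {..<n}"
    then have "u = 0\<^sub>v n" using u unfolding Z_def by (intro eq_vecI) auto
    then show False using u by simp
  qed
  moreover have "Z \<subseteq> {..<n}" unfolding Z_def by auto
  ultimately obtain a b where "a \<in> Z" "b \<in> {..<n} - Z" and Aab: "A $$ (a,b) \<noteq> 0"
    using A(3) unfolding irreducible_mat_def by blast
  then have a: "a < n" "u $ a = 0" and b: "b < n" "u $ b \<noteq> 0" unfolding Z_def by auto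
  have "0 < (\<Sum>k\<in>{0..<n}. A $$ (a,k) * u $ k)"
  proof (rule sum_pos2[of _ b])
    show "0 < A $$ (a,b) * u $ b"
      using A Aab a b u unfolding nonneg_mat_def nonneg_vec_def
      by (metis carrier_matD carrier_vecD order_le_less mult_pos_pos)
  qed (use A a b u in \<open>auto simp: nonneg_mat_def nonneg_vec_def\<close>)
  also have "\<dots> = (A *\<^sub>v u) $ a" using A a u by (simp add: scalar_prod_def)
  also have "\<dots> = 0" using eig a u by simp
  finally show False by simp
qed

lemma isometry_factorization_compress:
  fixes U L B C :: "'a :: comm_ring_1 mat"
  assumes U: "U \<in> carrier_mat n r" "U\<^sup>T * U = 1\<^sub>m r" and L: "L \<in> carrier_mat r r"
    and B: "B \<in> carrier_mat n k" and C: "C \<in> carrier_mat k k"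
    and eq: "U * L * U\<^sup>T = B * C * B\<^sup>T"
  shows "U * L = B * C * (U\<^sup>T * B)\<^sup>T" and "L = U\<^sup>T * B * C * (U\<^sup>T * B)\<^sup>T"
proof -
  have UL: "U * L \<in> carrier_mat n r" and BC: "B * C \<in> carrier_mat n k" using U L B C by auto
  have "U * L = U * L * (U\<^sup>T * U)" using U(2) UL by (metis right_mult_one_mat)
  also have "\<dots> = U * L * U\<^sup>T * U" using U UL by (simp add: assoc_mult_mat[of _ n r _ n _ r])
  also have "\<dots> = B * C * (B\<^sup>T * U)"
    unfolding eq using U BC B by (simp add: assoc_mult_mat[of _ n k _ n _ r])
  also have "B\<^sup>T * U = (U\<^sup>T * B)\<^sup>T" using U B by (simp add: transpose_mult)
  finally show UL_eq: "U * L = B * C * (U\<^sup>T * B)\<^sup>T" .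
  have "L = U\<^sup>T * U * L" using U(2) L by (metis left_mult_one_mat)
  also have "\<dots> = U\<^sup>T * (B * C * (U\<^sup>T * B)\<^sup>T)"
    unfolding UL_eq[symmetric] using U L by (metis assoc_mult_mat transpose_carrier_mat)
  also have "\<dots> = U\<^sup>T * B * C * (U\<^sup>T * B)\<^sup>T"
    using U B C by (simp add: assoc_mult_mat[of _ r n _ k _ r] assoc_mult_mat[of _ r n _ k _ k])
  finally show "L = U\<^sup>T * B * C * (U\<^sup>T * B)\<^sup>T" .
qed

lemma isometry_factorization_change_of_basis:
  fixes U L B C :: "'a :: field mat"
  assumes U: "U \<in> carrier_mat n r" "U\<^sup>T * U = 1\<^sub>m r"
    and L: "L \<in> carrier_mat r r" "det L \<noteq> 0"
    and B: "B \<in> carrier_mat n r" and C: "C \<in> carrier_mat r r"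
    and eq: "U * L * U\<^sup>T = B * C * B\<^sup>T"
  obtains T where "T \<in> carrier_mat r r" "U\<^sup>T * B * T = 1\<^sub>m r" "T * (U\<^sup>T * B) = 1\<^sub>m r"
    "B = U * (U\<^sup>T * B)" "C = T * L * T\<^sup>T" "T * L = C * (U\<^sup>T * B)\<^sup>T" "det C \<noteq> 0"
proof -
  define S where "S = U\<^sup>T * B"
  have S: "S \<in> carrier_mat r r" "S\<^sup>T \<in> carrier_mat r r" unfolding S_def using U B by auto
  have UL: "U * L = B * (C * S\<^sup>T)" and L_eq: "L = S * (C * S\<^sup>T)"
    using isometry_factorization_compress[OF U L(1) B C eq] S C B
    unfolding S_def[symmetric] by (auto simp: assoc_mult_mat[of _ _ r _ r _ r])
  have "det L = det S * (det C * det S)"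
    unfolding L_eq using S C by (simp add: det_mult det_transpose)
  then have "det S \<noteq> 0" "det C \<noteq> 0" using L by auto
  obtain T where T: "T \<in> carrier_mat r r" "S * T = 1\<^sub>m r" "T * S = 1\<^sub>m r"
    using det_nonzero_imp_inverse[OF S(1) \<open>det S \<noteq> 0\<close>] by blast
  have CSt: "C * S\<^sup>T \<in> carrier_mat r r" using C S by auto
  have "det (C * S\<^sup>T) \<noteq> 0"
    using C S \<open>det S \<noteq> 0\<close> \<open>det C \<noteq> 0\<close> by (simp add: det_mult det_transpose)
  then obtain X where X: "X \<in> carrier_mat r r" "C * S\<^sup>T * X = 1\<^sub>m r"
    using det_nonzero_imp_inverse[OF CSt] by blast
  have TL: "T * L = C * S\<^sup>T"
  proof -
    have "T * L = T * S * (C * S\<^sup>T)"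
      unfolding L_eq by (rule assoc_mult_mat[symmetric, OF T(1) S(1) CSt])
    then show ?thesis using T(3) left_mult_one_mat[OF CSt] by simp
  qed
  have "T * L * T\<^sup>T = C * (S\<^sup>T * T\<^sup>T)"
    unfolding TL using T S C by (metis assoc_mult_mat transpose_carrier_mat)
  also have "S\<^sup>T * T\<^sup>T = 1\<^sub>m r" using transpose_mult[OF T(1) S(1)] T(3) by simp
  finally have C_eq: "C = T * L * T\<^sup>T" using C by simp
  have "B = B * (C * S\<^sup>T * X)" using X B by simp
  also have "\<dots> = U * L * X"
    unfolding UL using B CSt X C S by (simp add: assoc_mult_mat[of _ n r _ r _ r])
  also have "\<dots> = U * S * (C * S\<^sup>T * X)" unfolding L_eq using U S CSt X C
    by (simp add: assoc_mult_mat[of _ n r _ r _ r] assoc_mult_mat[of _ r r _ r _ r])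
  finally have "B = U * S" using X U S by simp
  with T TL C_eq \<open>det C \<noteq> 0\<close> show ?thesis using that unfolding S_def by blast
qed

lemma isometry_factorization_first_row_col:
  fixes U B C T D :: "real mat"
  assumes U: "U \<in> carrier_mat n (Suc k)" and B: "B \<in> carrier_mat n (Suc k)"
    and C: "C \<in> carrier_mat (Suc k) (Suc k)" and T: "T \<in> carrier_mat (Suc k) (Suc k)"
    and D: "D \<in> carrier_mat k k"
    and TL: "T * dsum_mat (scalar_mat a) D = C * (U\<^sup>T * B)\<^sup>T"
  shows "row (U\<^sup>T * B) 0 = B\<^sup>T *\<^sub>v col U 0" and "a \<cdot>\<^sub>v col T 0 = C *\<^sub>v (B\<^sup>T *\<^sub>v col U 0)"
proof -
  show row: "row (U\<^sup>T * B) 0 = B\<^sup>T *\<^sub>v col U 0" using U B by (intro row_transpose_mult) auto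
  have "a \<cdot>\<^sub>v col T 0 = col (C * (U\<^sup>T * B)\<^sup>T) 0"
    using col_0_mult_dsum_scalar_mat[OF T D, of a] unfolding TL by simp
  also have "\<dots> = C *\<^sub>v col (U\<^sup>T * B)\<^sup>T 0" using U B C by (intro col_mult2) auto
  also have "col (U\<^sup>T * B)\<^sup>T 0 = row (U\<^sup>T * B) 0" using U by (intro col_transpose) auto
  finally show "a \<cdot>\<^sub>v col T 0 = C *\<^sub>v (B\<^sup>T *\<^sub>v col U 0)" unfolding row .
qed

lemma isometry_factorization_first_row_col_nonneg:
  fixes U B C T D :: "real mat"
  assumes U: "U \<in> carrier_mat n (Suc k)" "nonneg_vec (col U 0)"
    and B: "B \<in> carrier_mat n (Suc k)" "nonneg_mat B"
    and C: "C \<in> carrier_mat (Suc k) (Suc k)" "nonneg_mat C"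
    and T: "T \<in> carrier_mat (Suc k) (Suc k)" and D: "D \<in> carrier_mat k k" and a: "a > 0"
    and TL: "T * dsum_mat (scalar_mat a) D = C * (U\<^sup>T * B)\<^sup>T"
  shows "nonneg_vec (row (U\<^sup>T * B) 0)" and "nonneg_vec (col T 0)"
proof -
  note first = isometry_factorization_first_row_col[OF U(1) B(1) C(1) T D TL]
  have "nonneg_vec (B\<^sup>T *\<^sub>v col U 0)" by (rule nonneg_mult_mat_vec) (use U B in auto)
  moreover from this have "nonneg_vec (C *\<^sub>v (B\<^sup>T *\<^sub>v col U 0))"
    by (rule nonneg_mult_mat_vec[OF C(2)]) (use B C in auto)
  ultimately show "nonneg_vec (row (U\<^sup>T * B) 0)" "nonneg_vec (col T 0)"
    using first nonneg_vec_smult_iff[OF a] by metis+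
qed

lemma isometry_factorization_first_row_col_pos:
  fixes U B C T D :: "real mat"
  assumes U: "U \<in> carrier_mat n (Suc k)" "pos_vec (col U 0)"
    and B: "B \<in> carrier_mat n (Suc k)" "nonneg_mat B"
    and C: "C \<in> carrier_mat (Suc k) (Suc k)" "nonneg_mat C" "det C \<noteq> 0"
    and T: "T \<in> carrier_mat (Suc k) (Suc k)" "T * (U\<^sup>T * B) = 1\<^sub>m (Suc k)"
    and D: "D \<in> carrier_mat k k" and a: "a > 0"
    and TL: "T * dsum_mat (scalar_mat a) D = C * (U\<^sup>T * B)\<^sup>T"
  shows "pos_vec (row (U\<^sup>T * B) 0)" and "pos_vec (col T 0)"
proof -
  note first = isometry_factorization_first_row_col[OF U(1) B(1) C(1) T(1) D TL]
  have "T * U\<^sup>T * B = 1\<^sub>m (Suc k)" using T U B by (metis assoc_mult_mat transpose_carrier_mat)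
  then have B_cols: "\<exists>i<n. B\<^sup>T $$ (j,i) \<noteq> 0" if "j < Suc k" for j
    using left_inverse_imp_col_nonzero[of "T * U\<^sup>T" "Suc k" n B j] that T U B by auto
  have BtU: "pos_vec (B\<^sup>T *\<^sub>v col U 0)" by (rule pos_mult_mat_vec) (use U B B_cols in auto)
  moreover have "pos_vec (C *\<^sub>v (B\<^sup>T *\<^sub>v col U 0))"
    by (rule pos_mult_mat_vec) (use B C BtU det_nonzero_imp_row_nonzero[OF C(1,3)] in auto)
  ultimately show "pos_vec (row (U\<^sup>T * B) 0)" "pos_vec (col T 0)"
    using first pos_vec_smult_iff[OF a] by metis+
qed

theorem mainTheorem10:
  fixes n r :: nat and A U U1 D1 B C :: "real mat" and u :: "real vec"
  assumes A_E: "A \<in> E_set n"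
    and A_nz: "A \<noteq> 0\<^sub>m n n"
    and rk: "mat_rank n A = r" and st: "snt_rank n A = r"
    and u_perron: "normalised_perron_eigenvector n A u"
    and D1_dim: "D1 \<in> carrier_mat (r - 1) (r - 1)"
    and D1_diag: "diagonal_mat D1"
    and D1_nz: "\<forall>i < r - 1. D1 $$ (i,i) \<noteq> 0"
    and U1_dim: "U1 \<in> carrier_mat n (r - 1)"
    and U_def: "U = mat_of_cols n (u # cols U1)"
    and U_orth: "U\<^sup>T * U = 1\<^sub>m r"
    and A_U: "A = U * dsum_mat (scalar_mat (perron_eigenvalue A)) D1 * U\<^sup>T"
    and B_dim: "B \<in> carrier_mat n r" and B_nn: "nonneg_mat B"
    and C_dim: "C \<in> carrier_mat r r" and C_nn: "nonneg_mat C" and C_sym: "C\<^sup>T = C"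
    and A_BC: "A = B * C * B\<^sup>T"
  shows "\<exists>T Tinv. T \<in> carrier_mat r r \<and> Tinv \<in> carrier_mat r r
           \<and> T * Tinv = 1\<^sub>m r \<and> Tinv * T = 1\<^sub>m r
           \<and> nonneg_vec (col T 0) \<and> nonneg_vec (row Tinv 0)
           \<and> B = U * Tinv
           \<and> C = T * dsum_mat (scalar_mat (perron_eigenvalue A)) D1 * T\<^sup>T
           \<and> (irreducible_mat n A \<longrightarrow> pos_vec (col T 0) \<and> pos_vec (row Tinv 0))"
proof -
  define lam L where "lam = perron_eigenvalue A" and "L = dsum_mat (scalar_mat lam) D1"
  have u: "u \<in> carrier_vec n" "nonneg_vec u" "A *\<^sub>v u = lam \<cdot>\<^sub>v u" "u \<noteq> 0\<^sub>v n"
    using u_perron unfolding normalised_perron_eigenvector_def lam_def by auto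
  have "r = Suc (r - 1)" using arg_cong[OF U_orth, of dim_col] U_def U1_dim by auto
  then obtain k where r: "r = Suc k" by blast
  have U: "U \<in> carrier_mat n r" "col U 0 = u" using U_def U1_dim r u(1) by auto
  have A: "A \<in> carrier_mat n n" "nonneg_mat A" using A_E unfolding E_set_def SNN_def by auto
  have D1: "D1 \<in> carrier_mat k k" using D1_dim r by simp
  have L: "L \<in> carrier_mat r r" unfolding L_def r using D1 by (rule dsum_scalar_mat_carrier)
  have "lam \<noteq> 0"
    using dsum_scalar_nonzero_if_full_rank[of U n k D1 lam] U D1 A_U rk r
    unfolding mat_rank_def lam_def by simp
  then have lam_pos: "lam > 0"
    using eigenvalue_nonneg_if_nonneg_eigenvector[OF A u(1,2,4,3)] by simp
  have "det L \<noteq> 0"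
    using \<open>lam \<noteq> 0\<close> D1_nz r
    unfolding L_def det_dsum_scalar_mat[OF D1] det_diagonal_mat[OF D1 D1_diag] by simp
  then obtain T where T: "T \<in> carrier_mat r r" "U\<^sup>T * B * T = 1\<^sub>m r" "T * (U\<^sup>T * B) = 1\<^sub>m r"
    "B = U * (U\<^sup>T * B)" "C = T * L * T\<^sup>T" "T * L = C * (U\<^sup>T * B)\<^sup>T" "det C \<noteq> 0"
    using isometry_factorization_change_of_basis[OF U(1) U_orth L _ B_dim C_dim] A_U A_BC
    unfolding L_def lam_def by metis
  have nonneg: "nonneg_vec (row (U\<^sup>T * B) 0)" "nonneg_vec (col T 0)"
    using isometry_factorization_first_row_col_nonneg[of U n k B C T D1 lam]
      U u(2) B_dim B_nn C_dim C_nn T(1,6) D1 lam_pos r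
    unfolding L_def by auto
  have pos: "pos_vec (row (U\<^sup>T * B) 0)" "pos_vec (col T 0)" if "irreducible_mat n A"
    using isometry_factorization_first_row_col_pos[of U n k B C T D1 lam]
      U B_dim B_nn C_dim C_nn T(1,3,6,7) D1 lam_pos r
      nonneg_eigenvector_pos_if_irreducible[OF A that u(1,2,4,3)]
    unfolding L_def by auto
  have S: "U\<^sup>T * B \<in> carrier_mat r r" using U B_dim by simp
  show ?thesis using S T[unfolded L_def lam_def] nonneg pos by blast
qed

end
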